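(* For $n>2$, the homomorphism $\iota\colon G_n^2\to G_{n,\mathcal{P}}^2$ defined by $\iota(a_{ij})=a_{ij}^0$ is a monomorphism.
   Context: $G_n^2$ is the group with generators $a_{ij}=a_{\{i,j\}}$ for $2$-element subsets $\{i,j\}\subset\{1,\dots,n\}$ and relations $a_{ij}^2=1$; $a_{ij}a_{kl}=a_{kl}a_{ij}$ for distinct $i,j,k,l$; $a_{ij}a_{ik}a_{jk}=a_{jk}a_{ik}a_{ij}$ for distinct $i,j,k$. The group $G_{n,\mathcal{P}}^2$ ($G_n^2$ with parity) has generators $a_{ij}^{\epsilon}=a_{\{i,j\}}^{\epsilon}$ for $2$-element subsets $\{i,j\}$ and $\epsilon\in\{0,1\}$, with relations $(a_{ij}^\epsilon)^2=1$; $a_{ij}^{\epsilon}a_{kl}^{\epsilon'}=a_{kl}^{\epsilon'}a_{ij}^{\epsilon}$ for $\{i,j\}\cap\{k,l\}=\emptyset$ and all $\epsilon,\epsilon'$; and $a_{ij}^{\epsilon_{ij}}a_{ik}^{\epsilon_{ik}}a_{jk}^{\epsilon_{jk}}=a_{jk}^{\epsilon_{jk}}a_{ik}^{\epsilon_{ik}}a_{ij}^{\epsilon_{ij}}$ for distinct $i,j,k$ whenever $\epsilon_{ij}+\epsilon_{ik}+\epsilon_{jk}\equiv 0\pmod 2$. *)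

theory Defs
  imports Main
begin

(* Group presentations <X | R>: words are lists of letters (x, True) = x, (x, False) = x^-1.
   pres_eq R u v  means  u = v  in the group presented by relations R (pairs of words u = v). *)
inductive pres_eq :: "(('g \<times> bool) list \<times> ('g \<times> bool) list) set \<Rightarrow> ('g \<times> bool) list \<Rightarrow> ('g \<times> bool) list \<Rightarrow> bool"
  for R where
  pe_refl: "pres_eq R w w"
| pe_sym: "pres_eq R u v \<Longrightarrow> pres_eq R v u"
| pe_trans: "pres_eq R u v \<Longrightarrow> pres_eq R v w \<Longrightarrow> pres_eq R u w"
| pe_cancel: "pres_eq R [(x, b), (x, \<not> b)] []"
| pe_rel: "(u, v) \<in> R \<Longrightarrow> pres_eq R u v"
| pe_ctx: "pres_eq R u v \<Longrightarrow> pres_eq R (p @ u @ q) (p @ v @ q)"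

definition letter :: "'g \<Rightarrow> 'g \<times> bool" where
  "letter x = (x, True)"

(* generators a_{ij} of G_n^2 are indexed by 2-element subsets {i,j} of {1..n} *)
definition pairs :: "nat \<Rightarrow> nat set set" where
  "pairs n = {{i, j} | i j. i \<in> {1..n} \<and> j \<in> {1..n} \<and> i \<noteq> j}"

definition rels_G :: "nat \<Rightarrow> ((nat set \<times> bool) list \<times> (nat set \<times> bool) list) set" where
  "rels_G n =
     {([letter a, letter a], []) | a. a \<in> pairs n}
   \<union> {([letter {i,j}, letter {k,l}], [letter {k,l}, letter {i,j}]) | i j k l.
        i \<in> {1..n} \<and> j \<in> {1..n} \<and> k \<in> {1..n} \<and> l \<in> {1..n} \<and> distinct [i, j, k, l]}
   \<union> {([letter {i,j}, letter {i,k}, letter {j,k}], [letter {j,k}, letter {i,k}, letter {i,j}]) | i j k.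
        i \<in> {1..n} \<and> j \<in> {1..n} \<and> k \<in> {1..n} \<and> distinct [i, j, k]}"

(* generators a_{ij}^eps of G_{n,P}^2: pairs ({i,j}, eps) with eps \<in> {0,1} *)
definition pgens :: "nat \<Rightarrow> (nat set \<times> nat) set" where
  "pgens n = {(a, e). a \<in> pairs n \<and> e \<in> {0, 1}}"

definition rels_GP :: "nat \<Rightarrow> (((nat set \<times> nat) \<times> bool) list \<times> ((nat set \<times> nat) \<times> bool) list) set" where
  "rels_GP n =
     {([letter g, letter g], []) | g. g \<in> pgens n}
   \<union> {([letter ({i,j}, e), letter ({k,l}, e')], [letter ({k,l}, e'), letter ({i,j}, e)]) | i j k l e e'.
        i \<in> {1..n} \<and> j \<in> {1..n} \<and> k \<in> {1..n} \<and> l \<in> {1..n} \<and> distinct [i, j, k, l]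
        \<and> e \<in> {0, 1} \<and> e' \<in> {0, 1}}
   \<union> {([letter ({i,j}, eij), letter ({i,k}, eik), letter ({j,k}, ejk)],
        [letter ({j,k}, ejk), letter ({i,k}, eik), letter ({i,j}, eij)]) | i j k eij eik ejk.
        i \<in> {1..n} \<and> j \<in> {1..n} \<and> k \<in> {1..n} \<and> distinct [i, j, k]
        \<and> eij \<in> {0, 1} \<and> eik \<in> {0, 1} \<and> ejk \<in> {0, 1} \<and> even (eij + eik + ejk)}"

definition iota_word :: "(nat set \<times> bool) list \<Rightarrow> ((nat set \<times> nat) \<times> bool) list" where
  "iota_word w = map (\<lambda>(a, b). ((a, 0), b)) w"

end

theory Submission
  imports Defs
begin

(* The map a_{ij}^e \<mapsto> a_{ij} that forgets the parity sends every relation of G_{n,P}^2 to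
   a relation of G_n^2, so it induces a homomorphism G_{n,P}^2 \<rightarrow> G_n^2; it is a left inverse
   of \<iota>, which is therefore injective. The argument works for every n. *)

lemma pres_eq_map_apfst:
  assumes "pres_eq R u v"
    and "\<And>u v. (u, v) \<in> R \<Longrightarrow> pres_eq S (map (apfst f) u) (map (apfst f) v)"
  shows "pres_eq S (map (apfst f) u) (map (apfst f) v)"
  using assms(1)
proof (induction rule: pres_eq.induct)
  case (pe_cancel x b)
  show ?case using pres_eq.pe_cancel[of S "f x" b] by simp
next
  case (pe_ctx u v p q)
  then show ?case using pres_eq.pe_ctx by fastforce
qed (auto intro: pres_eq.intros assms(2))

lemma pres_eq_map_apfst_iff_of_retraction:
  assumes "\<And>u v. (u, v) \<in> R \<Longrightarrow> (map (apfst f) u, map (apfst f) v) \<in> S"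
    and "\<And>u v. (u, v) \<in> S \<Longrightarrow> (map (apfst g) u, map (apfst g) v) \<in> R"
    and "\<And>x. g (f x) = x"
  shows "pres_eq S (map (apfst f) u) (map (apfst f) v) \<longleftrightarrow> pres_eq R u v"
proof
  assume "pres_eq S (map (apfst f) u) (map (apfst f) v)"
  then have "pres_eq R (map (apfst g) (map (apfst f) u)) (map (apfst g) (map (apfst f) v))"
    by (rule pres_eq_map_apfst) (rule pres_eq.pe_rel, erule assms(2))
  then show "pres_eq R u v"
    by (simp add: assms(3) apfst_compose comp_def apfst_id[unfolded id_def])
qed (rule pres_eq_map_apfst, assumption, rule pres_eq.pe_rel, erule assms(1))

lemma iota_word_eq_map_apfst: "iota_word w = map (apfst (\<lambda>a. (a, 0))) w"
  by (simp add: iota_word_def apfst_def map_prod_def case_prod_beta)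

lemma rels_G_to_rels_GP:
  "(u, v) \<in> rels_G n \<Longrightarrow> (map (apfst (\<lambda>a. (a, 0))) u, map (apfst (\<lambda>a. (a, 0))) v) \<in> rels_GP n"
  unfolding rels_GP_def rels_G_def pgens_def
  by (auto simp: letter_def) blast+

lemma rels_GP_to_rels_G:
  "(u, v) \<in> rels_GP n \<Longrightarrow> (map (apfst fst) u, map (apfst fst) v) \<in> rels_G n"
  unfolding rels_GP_def rels_G_def pgens_def
  by (auto simp: letter_def) blast+

theorem mainTheorem3:
  fixes n :: nat and u v :: "(nat set \<times> bool) list"
  assumes "n > 2"
    and "fst ` set u \<subseteq> pairs n" and "fst ` set v \<subseteq> pairs n"
  shows "pres_eq (rels_G n) u v \<longleftrightarrow> pres_eq (rels_GP n) (iota_word u) (iota_word v)"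
  unfolding iota_word_eq_map_apfst
  by (rule pres_eq_map_apfst_iff_of_retraction[symmetric, where g = fst])
    (use rels_G_to_rels_GP rels_GP_to_rels_G in auto)

end
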